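(* Let $R$ be a finite commutative ring and let $F_R$ be a unitary operator on the space with orthonormal basis $\{\ket{r}:r\in R\}$ satisfying the control/target inversion property: for all $s\in R$, $(F_R^{\dagger}\otimes F_R)A_s(F_R\otimes F_R^{\dagger})=B_s$, where $A_s\ket{x}\ket{y}=\ket{x}\ket{y+sx}$ and $B_s\ket{x}\ket{y}=\ket{x+sy}\ket{y}$. Let $m\ge1$ and let $F_{R,m}$ be the quantum Fourier transform over the ring $M_m(R)$ of $m\times m$ matrices over $R$ defined from $F_R$. Then for every $S\in M_m(R)$, \[ (F_{R,m}^{\dagger}\otimes F_{R,m})\,L_S\,(F_{R,m}\otimes F_{R,m}^{\dagger}) = R'_S, \] where $L_S\ket{X}\ket{Y}=\ket{X}\ket{Y+SX}$ and $R'_S\ket{X}\ket{Y}=\ket{X+YS}\ket{Y}$ for all $X,Y\in M_m(R)$.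
   Context: A matrix $X=(x_{ij})\in M_m(R)$ is encoded in an $m\times m$ array of $R$-valued registers as the product state $\ket{X}=\bigotimes_{i=1}^m\bigotimes_{j=1}^m\ket{x_{ij}}$ (ordered $x_{11},x_{12},\dots,x_{1m},x_{21},\dots,x_{mm}$). The quantum Fourier transform over $M_m(R)$ is the linear operator $F_{R,m}:\ket{X}\mapsto\bigotimes_{i=1}^m\bigotimes_{j=1}^m F_R\ket{x_{ji}}$, i.e. apply $F_R$ to every register and transpose the array of registers. *)

theory Defs
  imports "HOL-Analysis.Analysis"
begin

text \<open>Linear operators on the finite-dimensional Hilbert space with orthonormal
  basis indexed by a finite type 'a are represented by their matrix entries:
  K y x = <y|K|x>.\<close>

type_synonym 'a qop = "'a \<Rightarrow> 'a \<Rightarrow> complex"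

definition qcomp :: "('a::finite) qop \<Rightarrow> 'a qop \<Rightarrow> 'a qop" (infixl "\<bullet>\<^sub>q" 70) where
  "qcomp A B = (\<lambda>y x. \<Sum>z\<in>UNIV. A y z * B z x)"

definition qid :: "'a qop" where
  "qid = (\<lambda>y x. if y = x then 1 else 0)"

definition qadj :: "'a qop \<Rightarrow> 'a qop" where
  "qadj A = (\<lambda>y x. cnj (A x y))"

definition unitary_op :: "('a::finite) qop \<Rightarrow> bool" where
  "unitary_op U \<longleftrightarrow> qcomp (qadj U) U = qid \<and> qcomp U (qadj U) = qid"

definition qtensor :: "'a qop \<Rightarrow> 'b qop \<Rightarrow> ('a \<times> 'b) qop" where
  "qtensor A B = (\<lambda>(y1, y2) (x1, x2). A y1 x1 * B y2 x2)"

definition basis_op :: "('a \<Rightarrow> 'a) \<Rightarrow> 'a qop" where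
  "basis_op f = (\<lambda>y x. if y = f x then 1 else 0)"

definition A_op :: "'r::comm_ring_1 \<Rightarrow> ('r \<times> 'r) qop" where
  "A_op s = basis_op (\<lambda>(x, y). (x, y + s * x))"

definition B_op :: "'r::comm_ring_1 \<Rightarrow> ('r \<times> 'r) qop" where
  "B_op s = basis_op (\<lambda>(x, y). (x + s * y, y))"

text \<open>Quantum Fourier transform over M_m(R), with matrices X in 'r^'m^'m
  (X $ i $ j = x_ij): |X> \<mapsto> tensor over (i,j) of F_R |x_ji>.\<close>
definition qft_mat :: "('r::finite) qop \<Rightarrow> ('r^'m::finite^'m) qop" where
  "qft_mat F = (\<lambda>Z X. \<Prod>(i, j)\<in>UNIV. F (Z $ i $ j) (X $ j $ i))"

definition L_op :: "('r::comm_ring_1)^'m::finite^'m \<Rightarrow> (('r^'m^'m) \<times> ('r^'m^'m)) qop" where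
  "L_op S = basis_op (\<lambda>(X, Y). (X, Y + S ** X))"

definition R'_op :: "('r::comm_ring_1)^'m::finite^'m \<Rightarrow> (('r^'m^'m) \<times> ('r^'m^'m)) qop" where
  "R'_op S = basis_op (\<lambda>(X, Y). (X + Y ** S, Y))"

end

theory Submission
  imports Defs
begin

text \<open>Entrywise, the hypothesis on F says that F a b * cnj (F c d) is unchanged when b is
  shifted by s * c and d by s * a simultaneously. An entry of F_{R,m} \<otimes> F_{R,m}^\<dagger> is a product
  of such factors, one per matrix position, and passing from (X1, Z2) to (X1 + X2 S, Z2 + S Z1)
  is a composite of m^3 elementary simultaneous shifts, one for each index triple (i, j, k):
  S_ki (X2)_jk is added at position (j, i) of X1 and S_ki (Z1)_ij at position (k, j) of Z2.
  Since F_{R,m} is again unitary, this entrywise identity is equivalent to the operator identity.\<close>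

lemma qcomp_assoc: "A \<bullet>\<^sub>q B \<bullet>\<^sub>q C = A \<bullet>\<^sub>q (B \<bullet>\<^sub>q (C::'a::finite qop))"
  unfolding qcomp_def
  by (auto simp: sum_distrib_left sum_distrib_right mult.assoc intro!: ext sum.swap)

lemma qcomp_qid_left [simp]: "qid \<bullet>\<^sub>q (A::'a::finite qop) = A"
  unfolding qcomp_def qid_def by (auto intro!: ext simp: if_distrib if_distribR cong: if_cong)

lemma qadj_qadj [simp]: "qadj (qadj A) = A"
  unfolding qadj_def by simp

lemma qadj_qtensor: "qadj (qtensor A B) = qtensor (qadj A) (qadj B)"
  unfolding qadj_def qtensor_def by (auto intro!: ext)

lemma qtensor_qid [simp]: "qtensor qid qid = qid"
  unfolding qtensor_def qid_def by (auto intro!: ext)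

lemma qcomp_qtensor:
  fixes A C :: "'a::finite qop" and B D :: "'b::finite qop"
  shows "qtensor A B \<bullet>\<^sub>q qtensor C D = qtensor (A \<bullet>\<^sub>q C) (B \<bullet>\<^sub>q D)"
  unfolding qcomp_def qtensor_def
  by (auto intro!: ext simp: UNIV_Times_UNIV[symmetric] sum.cartesian_product'
      sum_product split_def mult_ac simp del: UNIV_Times_UNIV)

lemma unitary_op_qadj: "unitary_op U \<Longrightarrow> unitary_op (qadj U)"
  unfolding unitary_op_def by simp

lemma unitary_op_qtensor: "unitary_op U \<Longrightarrow> unitary_op V \<Longrightarrow> unitary_op (qtensor U V)"
  unfolding unitary_op_def by (simp add: qadj_qtensor qcomp_qtensor)

lemma qcomp_basis_op_left:
  "bij f \<Longrightarrow> basis_op f \<bullet>\<^sub>q (V::'a::finite qop) = (\<lambda>y x. V (inv f y) x)"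
proof -
  assume "bij f"
  then have "y = f z \<longleftrightarrow> z = inv f y" for y z by (metis bij_inv_eq_iff)
  then show ?thesis
    unfolding qcomp_def basis_op_def by (auto intro!: ext simp: if_distrib if_distribR cong: if_cong)
qed

lemma qcomp_basis_op_right: "(V::'a::finite qop) \<bullet>\<^sub>q basis_op g = (\<lambda>y x. V y (g x))"
  unfolding qcomp_def basis_op_def by (auto intro!: ext simp: if_distrib if_distribR cong: if_cong)

lemma conj_basis_op_iff:
  fixes V :: "'a::finite qop"
  assumes "unitary_op V" and "bij f"
  shows "qadj V \<bullet>\<^sub>q basis_op f \<bullet>\<^sub>q V = basis_op g \<longleftrightarrow> (\<forall>z x. V z x = V (f z) (g x))"
proof -
  have adj_left: "qadj V \<bullet>\<^sub>q V = qid" and adj_right: "V \<bullet>\<^sub>q qadj V = qid"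
    using assms(1) unfolding unitary_op_def by auto
  have "qadj V \<bullet>\<^sub>q basis_op f \<bullet>\<^sub>q V = basis_op g \<longleftrightarrow> basis_op f \<bullet>\<^sub>q V = V \<bullet>\<^sub>q basis_op g"
  proof
    assume "qadj V \<bullet>\<^sub>q basis_op f \<bullet>\<^sub>q V = basis_op g"
    then have "V \<bullet>\<^sub>q (qadj V \<bullet>\<^sub>q basis_op f \<bullet>\<^sub>q V) = V \<bullet>\<^sub>q basis_op g"
      by simp
    then show "basis_op f \<bullet>\<^sub>q V = V \<bullet>\<^sub>q basis_op g"
      by (simp add: qcomp_assoc[symmetric] adj_right)
  next
    assume "basis_op f \<bullet>\<^sub>q V = V \<bullet>\<^sub>q basis_op g"
    then show "qadj V \<bullet>\<^sub>q basis_op f \<bullet>\<^sub>q V = basis_op g"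
      by (simp add: qcomp_assoc) (simp add: qcomp_assoc[symmetric] adj_left)
  qed
  also have "\<dots> \<longleftrightarrow> (\<forall>y x. V (inv f y) x = V y (g x))"
    by (simp add: qcomp_basis_op_left[OF assms(2)] qcomp_basis_op_right fun_eq_iff)
  also have "\<dots> \<longleftrightarrow> (\<forall>z x. V z x = V (f z) (g x))"
    using assms(2) by (metis bij_inv_eq_iff)
  finally show ?thesis .
qed

lemma bij_shear: "bij (\<lambda>(x, y). (x, y + f x :: 'b::group_add))"
  by (rule o_bij[where g = "\<lambda>(x, y). (x, y - f x)"]) (auto simp: fun_eq_iff)

text \<open>F a b * cnj (F c d) is the entry of qtensor F (qadj F) in row (a, d) and column (b, c).\<close>

definition control_target_inversion :: "'r::comm_ring_1 qop \<Rightarrow> bool" where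
  "control_target_inversion F \<longleftrightarrow>
     (\<forall>s a b c d. F a b * cnj (F c d) = F a (b + s * c) * cnj (F c (d + s * a)))"

lemma control_target_inversion_iff:
  fixes F :: "'r::{comm_ring_1, finite} qop"
  assumes "unitary_op F"
  shows "(\<forall>s. qtensor (qadj F) F \<bullet>\<^sub>q A_op s \<bullet>\<^sub>q qtensor F (qadj F) = B_op s)
    \<longleftrightarrow> control_target_inversion F"
proof -
  have "qtensor (qadj F) F \<bullet>\<^sub>q A_op s \<bullet>\<^sub>q qtensor F (qadj F) = B_op s \<longleftrightarrow>
    (\<forall>a b c d. F a b * cnj (F c d) = F a (b + s * c) * cnj (F c (d + s * a)))" for s
  proof -
    from conj_basis_op_iff[OF unitary_op_qtensor[OF assms unitary_op_qadj[OF assms]] bij_shear]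
    show ?thesis
      unfolding A_op_def B_op_def qadj_qtensor qadj_qadj
      by (auto simp: qtensor_def qadj_def mult.commute)
  qed
  then show ?thesis
    unfolding control_target_inversion_def by blast
qed

lemma prod_UNIV_fun_upd:
  "(\<Prod>x\<in>UNIV. g x ((f(x0 := v)) x)) = g x0 v * (\<Prod>x\<in>-{x0}. g x (f x))"
  for f :: "'a::finite \<Rightarrow> 'b" and g :: "'a \<Rightarrow> 'b \<Rightarrow> 'c::comm_monoid_mult"
  by (subst prod.remove[of UNIV x0]) (auto simp: Compl_eq_Diff_UNIV intro!: prod.cong)

lemma control_target_inversion_prod_update:
  fixes F :: "'r::comm_ring_1 qop" and a b :: "'p::finite \<Rightarrow> 'r" and c d :: "'q::finite \<Rightarrow> 'r"
  assumes "control_target_inversion F"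
  shows "(\<Prod>p\<in>UNIV. F (a p) (b p)) * (\<Prod>q\<in>UNIV. cnj (F (c q) (d q))) =
    (\<Prod>p\<in>UNIV. F (a p) ((b(p0 := b p0 + s * c q0)) p)) *
    (\<Prod>q\<in>UNIV. cnj (F (c q) ((d(q0 := d q0 + s * a p0)) q)))"
proof -
  have "F (a p0) (b p0) * cnj (F (c q0) (d q0)) =
      F (a p0) (b p0 + s * c q0) * cnj (F (c q0) (d q0 + s * a p0))"
    using assms unfolding control_target_inversion_def by blast
  moreover have "(\<Prod>p\<in>UNIV. F (a p) (b p)) = F (a p0) (b p0) * (\<Prod>p\<in>-{p0}. F (a p) (b p))"
    using prod_UNIV_fun_upd[of "\<lambda>p. F (a p)" b p0 "b p0"] by simp
  moreover have "(\<Prod>q\<in>UNIV. cnj (F (c q) (d q))) =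
      cnj (F (c q0) (d q0)) * (\<Prod>q\<in>-{q0}. cnj (F (c q) (d q)))"
    using prod_UNIV_fun_upd[of "\<lambda>q z. cnj (F (c q) z)" d q0 "d q0"] by (simp del: cnj_prod)
  ultimately show ?thesis
    using prod_UNIV_fun_upd[of "\<lambda>p. F (a p)" b p0 "b p0 + s * c q0"]
      prod_UNIV_fun_upd[of "\<lambda>q z. cnj (F (c q) z)" d q0 "d q0 + s * a p0"]
    by (simp del: cnj_prod fun_upd_apply add: mult_ac)
qed

lemma control_target_inversion_prod_shift:
  fixes F :: "'r::comm_ring_1 qop" and M :: "'p::finite \<Rightarrow> 'q::finite \<Rightarrow> 'r"
  assumes "control_target_inversion F"
  shows "(\<Prod>p\<in>UNIV. F (a p) (b p)) * (\<Prod>q\<in>UNIV. cnj (F (c q) (d q))) =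
    (\<Prod>p\<in>UNIV. F (a p) (b p + (\<Sum>q\<in>UNIV. M p q * c q))) *
    (\<Prod>q\<in>UNIV. cnj (F (c q) (d q + (\<Sum>p\<in>UNIV. M p q * a p))))"
proof -
  let ?amp = "\<lambda>b d. (\<Prod>p\<in>UNIV. F (a p) (b p)) * (\<Prod>q\<in>UNIV. cnj (F (c q) (d q)))"
  let ?M = "\<lambda>T p q. if (p, q) \<in> T then M p q else 0"
  have "?amp b d = ?amp (\<lambda>p. b p + (\<Sum>q\<in>UNIV. ?M T p q * c q)) (\<lambda>q. d q + (\<Sum>p\<in>UNIV. ?M T p q * a p))"
    if "finite T" for T
    using that
  proof (induction T rule: finite_induct)
    case empty
    show ?case by simp
  next
    case (insert pq T)
    obtain p0 q0 where pq: "pq = (p0, q0)" by fastforce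
    have M_insert: "?M (insert pq T) p q = ?M T p q + (if p = p0 \<and> q = q0 then M p0 q0 else 0)" for p q
      using insert.hyps pq by auto
    let ?b = "\<lambda>p. b p + (\<Sum>q\<in>UNIV. ?M T p q * c q)"
    let ?d = "\<lambda>q. d q + (\<Sum>p\<in>UNIV. ?M T p q * a p)"
    have b_insert:
      "(\<lambda>p. b p + (\<Sum>q\<in>UNIV. ?M (insert pq T) p q * c q)) = ?b(p0 := ?b p0 + M p0 q0 * c q0)"
      unfolding M_insert distrib_right sum.distrib
      by (auto simp: fun_eq_iff if_distrib if_distribR cong: if_cong)
    have d_insert:
      "(\<lambda>q. d q + (\<Sum>p\<in>UNIV. ?M (insert pq T) p q * a p)) = ?d(q0 := ?d q0 + M p0 q0 * a p0)"
      unfolding M_insert distrib_right sum.distrib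
      by (auto simp: fun_eq_iff if_distrib if_distribR cong: if_cong)
    have "?amp b d = ?amp ?b ?d"
      by (rule insert.IH)
    also have "\<dots> = ?amp (?b(p0 := ?b p0 + M p0 q0 * c q0)) (?d(q0 := ?d q0 + M p0 q0 * a p0))"
      by (rule control_target_inversion_prod_update[OF assms])
    finally show ?case
      by (simp only: b_insert[symmetric] d_insert[symmetric])
  qed
  from this[of UNIV] show ?thesis by simp
qed

lemma prod_if_one_zero:
  "finite A \<Longrightarrow> (\<Prod>x\<in>A. if P x then 1 else 0) = (if \<forall>x\<in>A. P x then 1 else (0::'a::comm_semiring_1))"
  by (induction A rule: finite_induct) auto

lemma sum_prod_vec_nth:
  fixes h :: "'n::finite \<Rightarrow> 'a::finite \<Rightarrow> 'c::comm_semiring_1"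
  shows "(\<Sum>v\<in>UNIV. \<Prod>j\<in>UNIV. h j (v $ j)) = (\<Prod>j\<in>UNIV. \<Sum>z\<in>UNIV. h j z)"
proof -
  have "(\<Sum>v\<in>UNIV. \<Prod>j\<in>UNIV. h j (v $ j)) = (\<Sum>f\<in>UNIV. \<Prod>j\<in>UNIV. h j (f j))"
    by (rule sum.reindex_bij_witness[of _ vec_lambda vec_nth]) auto
  then show ?thesis
    by (simp add: prod_sum_PiE)
qed

lemma sum_prod_matrix_nth:
  fixes h :: "'m::finite \<Rightarrow> 'n::finite \<Rightarrow> 'a::finite \<Rightarrow> 'c::comm_semiring_1"
  shows "(\<Sum>Z\<in>UNIV. \<Prod>i\<in>UNIV. \<Prod>j\<in>UNIV. h i j (Z $ i $ j)) = (\<Prod>i\<in>UNIV. \<Prod>j\<in>UNIV. \<Sum>z\<in>UNIV. h i j z)"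
  using sum_prod_vec_nth[of "\<lambda>i v. \<Prod>j\<in>UNIV. h i j (v $ j)"] by (simp add: sum_prod_vec_nth)

lemma qft_mat_nested: "qft_mat F Z X = (\<Prod>i\<in>UNIV. \<Prod>j\<in>UNIV. F (Z $ i $ j) (X $ j $ i))"
  unfolding qft_mat_def by (simp add: prod.cartesian_product)

lemma qadj_qft_mat: "qadj (qft_mat F) = qft_mat (qadj F)"
proof (rule ext)+
  fix Y X
  show "qadj (qft_mat F) Y X = qft_mat (qadj F) Y X"
    unfolding qadj_def qft_mat_nested cnj_prod by (rule prod.swap)
qed

lemma qft_mat_isometry:
  fixes U :: "'r::finite qop"
  assumes "qadj U \<bullet>\<^sub>q U = qid"
  shows "qadj (qft_mat U) \<bullet>\<^sub>q (qft_mat U :: ('r^'m::finite^'m) qop) = qid"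
proof (rule ext)+
  fix Y X :: "'r^'m^'m"
  have U_columns: "(\<Sum>z\<in>UNIV. cnj (U z y) * U z x) = qid y x" for y x
    using assms by (simp add: qcomp_def qadj_def fun_eq_iff)
  have "(qadj (qft_mat U) \<bullet>\<^sub>q qft_mat U) Y X =
      (\<Sum>Z\<in>UNIV. \<Prod>i\<in>UNIV. \<Prod>j\<in>UNIV. cnj (U (Z $ i $ j) (Y $ j $ i)) * U (Z $ i $ j) (X $ j $ i))"
    by (simp add: qcomp_def qadj_def qft_mat_nested prod.distrib)
  also have "\<dots> = (\<Prod>i\<in>UNIV. \<Prod>j\<in>UNIV. qid (Y $ j $ i) (X $ j $ i))"
    unfolding U_columns[symmetric] by (rule sum_prod_matrix_nth)
  also have "\<dots> = qid Y X"
    by (simp add: qid_def prod_if_one_zero vec_eq_iff)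
  finally show "(qadj (qft_mat U) \<bullet>\<^sub>q qft_mat U) Y X = qid Y X" .
qed

lemma unitary_op_qft_mat:
  "unitary_op F \<Longrightarrow> unitary_op (qft_mat F :: ('r::finite^'m::finite^'m) qop)"
  using qft_mat_isometry[of F] qft_mat_isometry[of "qadj F"]
  unfolding unitary_op_def by (simp add: qadj_qft_mat)

lemma qft_mat_shift:
  fixes F :: "'r::{comm_ring_1, finite} qop" and S Z1 Z2 X1 X2 :: "'r^'m::finite^'m"
  assumes "control_target_inversion F"
  shows "qft_mat F Z1 X1 * cnj (qft_mat F X2 Z2) =
    qft_mat F Z1 (X1 + X2 ** S) * cnj (qft_mat F X2 (Z2 + S ** Z1))"
proof -
  \<comment> \<open>M (i, j) (j, k) = S_ki couples position (i, j) of Z1, X1 with position (j, k) of X2, Z2.\<close>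
  define M :: "'m \<times> 'm \<Rightarrow> 'm \<times> 'm \<Rightarrow> 'r" where
    "M = (\<lambda>(i, j) (j', k). if j = j' then S $ k $ i else 0)"
  have right_mult: "(\<Sum>q\<in>UNIV. M p q * X2 $ fst q $ snd q) = (X2 ** S) $ snd p $ fst p" for p
    by (cases p) (simp add: M_def matrix_matrix_mult_def UNIV_Times_UNIV[symmetric] sum.cartesian_product'
        if_distrib[of "times _"] sum.If_cases if_distrib[of "sum _"] mult.commute del: UNIV_Times_UNIV)
  have left_mult: "(\<Sum>p\<in>UNIV. M p q * Z1 $ fst p $ snd p) = (S ** Z1) $ snd q $ fst q" for q
    by (cases q) (simp add: M_def matrix_matrix_mult_def UNIV_Times_UNIV[symmetric] sum.cartesian_product'
        if_distrib[of "\<lambda>u. u * _"] cong: if_cong del: UNIV_Times_UNIV)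
  show ?thesis
    using control_target_inversion_prod_shift[OF assms, of "\<lambda>(i, j). Z1 $ i $ j" "\<lambda>(i, j). X1 $ j $ i"
        "\<lambda>(j, k). X2 $ j $ k" "\<lambda>(j, k). Z2 $ k $ j" M]
    by (simp add: qft_mat_def split_def right_mult left_mult)
qed

theorem mainTheorem5:
  fixes F :: "('r::{comm_ring_1, finite}) qop"
    and S :: "'r^'m::finite^'m"
  assumes "unitary_op F"
    and "\<forall>s::'r. qcomp (qcomp (qtensor (qadj F) F) (A_op s)) (qtensor F (qadj F)) = B_op s"
  shows "qcomp (qcomp (qtensor (qadj (qft_mat F)) (qft_mat F)) (L_op S))
           (qtensor (qft_mat F) (qadj (qft_mat F))) = R'_op S"
proof -
  let ?V = "qtensor (qft_mat F) (qadj (qft_mat F)) :: (('r^'m^'m) \<times> ('r^'m^'m)) qop"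
  have "control_target_inversion F"
    using assms control_target_inversion_iff by blast
  then have "\<forall>Z X. ?V Z X = ?V ((\<lambda>(X, Y). (X, Y + S ** X)) Z) ((\<lambda>(X, Y). (X + Y ** S, Y)) X)"
    by (auto simp: qtensor_def qadj_def qft_mat_shift)
  moreover have "unitary_op ?V"
    by (intro unitary_op_qtensor unitary_op_qadj unitary_op_qft_mat assms(1))
  ultimately have "qadj ?V \<bullet>\<^sub>q basis_op (\<lambda>(X, Y). (X, Y + S ** X)) \<bullet>\<^sub>q ?V =
      basis_op (\<lambda>(X, Y). (X + Y ** S, Y))"
    using conj_basis_op_iff[OF _ bij_shear] by blast
  then show ?thesis
    unfolding L_op_def R'_op_def by (simp add: qadj_qtensor)
qed

end
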